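(* Suppose Assumptions 1–4 hold and $p$ is convex. Let $$s=\inf\{q\ge0 : p(q)=\min_n C_n'(0)\},\qquad t=\inf\{q\ge0:\ \min_n C_n'(q)\ge p(q)+q\,\partial_+p(q)\}.$$ If $\partial_-p(s)<0$, then every monopoly output $\mathbf{x}^P$ satisfies $$\gamma(\mathbf{x}^P)\ge\frac{\partial_-p(s)}{3\,\partial_-p(s)+\partial_+p(t)}.$$
   Context: Cournot model: $N$ suppliers, inverse demand $p:[0,\infty)\to[0,\infty)$, supplier $n$ has cost $C_n:[0,\infty)\to[0,\infty)$ and chooses $x_n\ge0$; $X=\sum_n x_n$. $\partial_\pm$ denote right/left derivatives; $C_n'(0)$ is the right derivative at $0$. Assumption 1: each $C_n$ is convex, continuous, nondecreasing on $[0,\infty)$, continuously differentiable on $(0,\infty)$, with $C_n(0)=0$. Assumption 2: $p$ is continuous, nonnegative, nonincreasing, $p(0)>0$; its right derivative at $0$ exists and at every $q>0$ its left and right derivatives exist. Assumption 3: there exists $R>0$ such that $p(R)\le\min_n C_n'(0)$. Assumption 4: $p(0)>\min_n C_n'(0)$. A monopoly output is an optimal solution $\mathbf{x}^P$ of $\max_{\mathbf{x}\ge0}\ p\!\left(\sum_n x_n\right)\sum_n x_n-\sum_n C_n(x_n)$. Social welfare of $\mathbf{x}\ge0$: $W(\mathbf{x})=\int_0^X p(q)\,dq-\sum_{n=1}^N C_n(x_n)$; a social optimum $\mathbf{x}^S$ maximizes $W$. Efficiency: $\gamma(\mathbf{x})=W(\mathbf{x})/W(\mathbf{x}^S)$.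 *)

theory Defs
  imports "HOL-Analysis.Analysis"
begin

definition right_deriv :: "(real \<Rightarrow> real) \<Rightarrow> real \<Rightarrow> real" where
  "right_deriv f q = (THE D. (f has_real_derivative D) (at_right q))"

definition left_deriv :: "(real \<Rightarrow> real) \<Rightarrow> real \<Rightarrow> real" where
  "left_deriv f q = (THE D. (f has_real_derivative D) (at_left q))"

text \<open>Suppliers are indexed by n < N; an output vector is x :: nat => real,
  only the entries n < N matter.\<close>
definition feasible :: "nat \<Rightarrow> (nat \<Rightarrow> real) \<Rightarrow> bool" where
  "feasible N x \<longleftrightarrow> (\<forall>n<N. 0 \<le> x n)"

definition total :: "nat \<Rightarrow> (nat \<Rightarrow> real) \<Rightarrow> real" where
  "total N x = (\<Sum>n<N. x n)"

definition profit :: "nat \<Rightarrow> (real \<Rightarrow> real) \<Rightarrow> (nat \<Rightarrow> real \<Rightarrow> real) \<Rightarrow> (nat \<Rightarrow> real) \<Rightarrow> real" where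
  "profit N p C x = p (total N x) * total N x - (\<Sum>n<N. C n (x n))"

definition monopoly_output :: "nat \<Rightarrow> (real \<Rightarrow> real) \<Rightarrow> (nat \<Rightarrow> real \<Rightarrow> real) \<Rightarrow> (nat \<Rightarrow> real) \<Rightarrow> bool" where
  "monopoly_output N p C x \<longleftrightarrow> feasible N x \<and>
     (\<forall>y. feasible N y \<longrightarrow> profit N p C y \<le> profit N p C x)"

definition welfare :: "nat \<Rightarrow> (real \<Rightarrow> real) \<Rightarrow> (nat \<Rightarrow> real \<Rightarrow> real) \<Rightarrow> (nat \<Rightarrow> real) \<Rightarrow> real" where
  "welfare N p C x = integral {0..total N x} p - (\<Sum>n<N. C n (x n))"

definition social_optimum :: "nat \<Rightarrow> (real \<Rightarrow> real) \<Rightarrow> (nat \<Rightarrow> real \<Rightarrow> real) \<Rightarrow> (nat \<Rightarrow> real) \<Rightarrow> bool" where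
  "social_optimum N p C x \<longleftrightarrow> feasible N x \<and>
     (\<forall>y. feasible N y \<longrightarrow> welfare N p C y \<le> welfare N p C x)"

definition efficiency :: "nat \<Rightarrow> (real \<Rightarrow> real) \<Rightarrow> (nat \<Rightarrow> real \<Rightarrow> real) \<Rightarrow> (nat \<Rightarrow> real) \<Rightarrow> (nat \<Rightarrow> real) \<Rightarrow> real" where
  "efficiency N p C xS x = welfare N p C x / welfare N p C xS"

text \<open>C_n'(q): right derivative (at q>0 it equals the derivative; at 0 it is the right derivative).\<close>
definition min_mc :: "nat \<Rightarrow> (nat \<Rightarrow> real \<Rightarrow> real) \<Rightarrow> real \<Rightarrow> real" where
  "min_mc N C q = Min ((\<lambda>n. right_deriv (C n) q) ` {..<N})"

definition assm1 :: "nat \<Rightarrow> (nat \<Rightarrow> real \<Rightarrow> real) \<Rightarrow> bool" where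
  "assm1 N C \<longleftrightarrow> (\<forall>n<N.
     convex_on {0..} (C n) \<and> continuous_on {0..} (C n) \<and> mono_on {0..} (C n) \<and>
     (\<forall>q>0. C n differentiable (at q)) \<and> continuous_on {0<..} (deriv (C n)) \<and>
     C n 0 = 0)"

definition assm2 :: "(real \<Rightarrow> real) \<Rightarrow> bool" where
  "assm2 p \<longleftrightarrow> continuous_on {0..} p \<and> (\<forall>q\<ge>0. 0 \<le> p q) \<and>
     (\<forall>a b. 0 \<le> a \<and> a \<le> b \<longrightarrow> p b \<le> p a) \<and> p 0 > 0 \<and>
     (\<exists>D. (p has_real_derivative D) (at_right 0)) \<and>
     (\<forall>q>0. (\<exists>D. (p has_real_derivative D) (at_left q)) \<and>
            (\<exists>D. (p has_real_derivative D) (at_right q)))"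

definition assm3 :: "nat \<Rightarrow> (real \<Rightarrow> real) \<Rightarrow> (nat \<Rightarrow> real \<Rightarrow> real) \<Rightarrow> bool" where
  "assm3 N p C \<longleftrightarrow> (\<exists>R>0. p R \<le> min_mc N C 0)"

definition assm4 :: "nat \<Rightarrow> (real \<Rightarrow> real) \<Rightarrow> (nat \<Rightarrow> real \<Rightarrow> real) \<Rightarrow> bool" where
  "assm4 N p C \<longleftrightarrow> p 0 > min_mc N C 0"

end

theory Submission
  imports Defs
begin

(* Let X be the total monopoly output, mu = p X + X p'+(X) the marginal revenue there,
   delta = -p'+(X) >= 0 and alpha = -p'-(s) > 0.  The argument has four ingredients:
   (1) First-order conditions of the monopoly: mu <= C_n'(X) for every supplier, so X lies in
       the set defining t, hence t <= X and, p being convex, p'+(t) <= p'+(X).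
   (2) Supporting hyperplane: comparing profits along segments towards any feasible y and using
       the tangent of the convex p, cost(y) - cost(xP) >= mu (total y - X).  With y = 0 this gives
       mu >= min_n C_n'(0) = p(s), and the monopoly welfare is at least its profit >= delta X^2.
   (3) Since p falls at rate >= alpha before s, the price is below mu beyond X + delta X / alpha;
       hence the social optimum gains at most (delta X)^2 / alpha over the monopoly.
   (4) Combining, alpha (W(xS) - W(xP)) <= delta W(xP), which is rearranged into the bound. *)

lemma slope_swap: "(x - y) / (u - v) = (y - x) / (v - (u::real))"
  by (metis minus_diff_eq minus_divide_divide)

lemma convex_slope_mono:
  fixes f :: "real \<Rightarrow> real"
  assumes f: "convex_on {0..} f" and "0 \<le> a" "a < b" "a \<le> c" "c < d" "b \<le> d"
  shows "(f b - f a) / (b - a) \<le> (f d - f c) / (d - c)"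
proof -
  have left: "(f b - f a) / (b - a) \<le> (f d - f a) / (d - a)"
  proof (cases "b = d")
    case False
    with assms convex_on_slope_le(1)[OF f, of a d b] show ?thesis by (simp add: slope_swap)
  qed simp
  have right: "(f d - f a) / (d - a) \<le> (f d - f c) / (d - c)"
  proof (cases "a = c")
    case False
    with assms convex_on_slope_le(2)[OF f, of a d c] show ?thesis by (simp add: slope_swap)
  qed simp
  from left right show ?thesis by linarith
qed

lemma convex_right_deriv_le_slope:
  fixes f :: "real \<Rightarrow> real"
  assumes f: "convex_on {0..} f" and D: "(f has_real_derivative D) (at_right q)"
    and "0 \<le> q" "q \<le> a" "a < b"
  shows "D \<le> (f b - f a) / (b - a)"
proof -
  have lim: "((\<lambda>y. (f y - f q) / (y - q)) \<longlongrightarrow> D) (at_right q)"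
    using D by (simp add: has_field_derivative_iff)
  have near: "\<forall>\<^sub>F y in at_right q. q < y \<and> y < b"
    using eventually_at_right_less[of q] order_tendstoD(2)[OF tendsto_ident_at[of q "{q<..}"], of b] assms
    by (auto intro: eventually_conj)
  have "\<forall>\<^sub>F y in at_right q. (f y - f q) / (y - q) \<le> (f b - f a) / (b - a)"
    by (rule eventually_mono[OF near]) (use assms in \<open>auto intro: convex_slope_mono[OF f]\<close>)
  from tendsto_upperbound[OF lim this] show ?thesis by simp
qed

lemma convex_slope_le_right_deriv:
  fixes f :: "real \<Rightarrow> real"
  assumes f: "convex_on {0..} f" and D: "(f has_real_derivative D) (at_right q)"
    and "0 \<le> a" "a < b" "b \<le> q"
  shows "(f b - f a) / (b - a) \<le> D"
proof -
  have lim: "((\<lambda>y. (f y - f q) / (y - q)) \<longlongrightarrow> D) (at_right q)"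
    using D by (simp add: has_field_derivative_iff)
  have "\<forall>\<^sub>F y in at_right q. (f b - f a) / (b - a) \<le> (f y - f q) / (y - q)"
    by (rule eventually_mono[OF eventually_at_right_less[of q]])
      (use assms in \<open>auto intro: convex_slope_mono[OF f]\<close>)
  from tendsto_lowerbound[OF lim this] show ?thesis by simp
qed

lemma convex_slope_le_left_deriv:
  fixes f :: "real \<Rightarrow> real"
  assumes f: "convex_on {0..} f" and D: "(f has_real_derivative D) (at_left q)"
    and "0 \<le> a" "a < b" "b \<le> q"
  shows "(f b - f a) / (b - a) \<le> D"
proof -
  have lim: "((\<lambda>y. (f y - f q) / (y - q)) \<longlongrightarrow> D) (at_left q)"
    using D by (simp add: has_field_derivative_iff)
  have near: "\<forall>\<^sub>F y in at_left q. y < q \<and> a < y"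
    using assms by (subst eventually_at_left_field) (intro exI[of _ a], auto)
  have "\<forall>\<^sub>F y in at_left q. (f b - f a) / (b - a) \<le> (f y - f q) / (y - q)"
    by (rule eventually_mono[OF near])
      (use assms in \<open>auto simp: slope_swap[of "f y" "f q" y q for y] intro: convex_slope_mono[OF f]\<close>)
  from tendsto_lowerbound[OF lim this] show ?thesis by simp
qed

lemma convex_right_deriv_mono:
  fixes f :: "real \<Rightarrow> real"
  assumes f: "convex_on {0..} f"
    and Dt: "(f has_real_derivative Dt) (at_right t)" and Dx: "(f has_real_derivative Dx) (at_right x)"
    and "0 \<le> t" "t \<le> x"
  shows "Dt \<le> Dx"
proof -
  have lim: "((\<lambda>y. (f y - f x) / (y - x)) \<longlongrightarrow> Dx) (at_right x)"
    using Dx by (simp add: has_field_derivative_iff)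
  have "\<forall>\<^sub>F y in at_right x. Dt \<le> (f y - f x) / (y - x)"
    by (rule eventually_mono[OF eventually_at_right_less[of x]])
      (use assms in \<open>auto intro: convex_right_deriv_le_slope[OF f Dt]\<close>)
  from tendsto_lowerbound[OF lim this] show ?thesis by simp
qed

lemma convex_right_tangent:
  fixes f :: "real \<Rightarrow> real"
  assumes f: "convex_on {0..} f" and D: "(f has_real_derivative D) (at_right q)"
    and "0 \<le> q" "0 \<le> z"
  shows "f q + D * (z - q) \<le> f z"
proof (cases z q rule: linorder_cases)
  case less
  with assms convex_slope_le_right_deriv[OF f D, of z q] have "(f q - f z) / (q - z) \<le> D" by simp
  with less have "f q - f z \<le> D * (q - z)" by (simp add: pos_divide_le_eq mult.commute)
  then show ?thesis by (simp add: algebra_simps)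
next
  case greater
  with assms convex_right_deriv_le_slope[OF f D, of q z] have "D \<le> (f z - f q) / (z - q)" by simp
  with greater have "D * (z - q) \<le> f z - f q" by (simp add: pos_le_divide_eq)
  then show ?thesis by (simp add: algebra_simps)
qed simp

lemma antimono_right_deriv_nonpos:
  fixes f :: "real \<Rightarrow> real"
  assumes D: "(f has_real_derivative D) (at_right x)" and dec: "\<And>y. x < y \<Longrightarrow> f y \<le> f x"
  shows "D \<le> 0"
proof -
  have lim: "((\<lambda>y. (f y - f x) / (y - x)) \<longlongrightarrow> D) (at_right x)"
    using D by (simp add: has_field_derivative_iff)
  have "\<forall>\<^sub>F y in at_right x. (f y - f x) / (y - x) \<le> 0"
    by (rule eventually_mono[OF eventually_at_right_less[of x]])
      (auto simp: dec divide_nonpos_pos)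
  from tendsto_upperbound[OF lim this] show ?thesis by simp
qed

text \<open>One-sided derivatives are unique, so \<open>right_deriv\<close>/\<open>left_deriv\<close> pick them out.\<close>
lemma right_deriv_eqI:
  assumes "(f has_real_derivative D) (at_right q)"
  shows "right_deriv f q = D"
  unfolding right_deriv_def
proof (rule the_equality)
  fix D' assume "(f has_real_derivative D') (at_right q)"
  with assms show "D' = D"
    by (intro tendsto_unique[of "at_right q" "\<lambda>y. (f y - f q) / (y - q)"])
      (simp_all add: has_field_derivative_iff)
qed (rule assms)

lemma left_deriv_eqI:
  assumes "(f has_real_derivative D) (at_left q)"
  shows "left_deriv f q = D"
  unfolding left_deriv_def
proof (rule the_equality)
  fix D' assume "(f has_real_derivative D') (at_left q)"
  with assms show "D' = D"
    by (intro tendsto_unique[of "at_left q" "\<lambda>y. (f y - f q) / (y - q)"])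
      (simp_all add: has_field_derivative_iff)
qed (rule assms)

text \<open>A convex nondecreasing function on \<open>[0,\<infinity>)\<close> is right differentiable at \<open>0\<close>:
  its chord slopes from \<open>0\<close> decrease as the chord shrinks and are bounded below by \<open>0\<close>.\<close>
lemma convex_mono_right_differentiable_0:
  fixes f :: "real \<Rightarrow> real"
  assumes f: "convex_on {0..} f" and m: "mono_on {0..} f"
  shows "\<exists>D. (f has_real_derivative D) (at_right 0)"
proof -
  let ?g = "\<lambda>y. (f y - f 0) / (y - 0)"
  have "(?g \<longlongrightarrow> Inf (?g ` ({0<..} \<inter> UNIV))) (at 0 within ({0<..} \<inter> UNIV))"
  proof (rule Lim_right_bound[where K=0])
    fix a b :: real assume "0 < a" "a \<le> b"
    then show "?g a \<le> ?g b"
      using convex_slope_mono[OF f, of 0 a 0 b] by (cases "a = b") auto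
  next
    fix a :: real assume "0 < a"
    then show "0 \<le> ?g a" using m by (auto simp: mono_on_def)
  qed
  then show ?thesis by (auto simp: has_field_derivative_iff)
qed

lemma le_of_vanishing_perturbation:
  fixes a b K :: real
  assumes K: "0 \<le> K" and le: "\<And>l. 0 < l \<Longrightarrow> l \<le> 1 \<Longrightarrow> b - l * K \<le> a"
  shows "b \<le> a"
proof (rule ccontr)
  assume "\<not> b \<le> a"
  then have e: "0 < b - a" by simp
  define l where "l = min 1 ((b - a) / (2 * (K + 1)))"
  have l: "0 < l" "l \<le> 1" using e K by (auto simp: l_def)
  have "l * K \<le> (b - a) / (2 * (K + 1)) * K" using K by (intro mult_right_mono) (auto simp: l_def)
  also have "\<dots> \<le> (b - a) / 2" using K e by (simp add: field_simps)
  finally have "l * K \<le> (b - a) / 2" .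
  moreover have "b - l * K \<le> a" by (rule le[OF l])
  ultimately show False using e by argo
qed

definition cost :: "nat \<Rightarrow> (nat \<Rightarrow> real \<Rightarrow> real) \<Rightarrow> (nat \<Rightarrow> real) \<Rightarrow> real" where
  "cost N C x = (\<Sum>n<N. C n (x n))"

lemma profit_eq: "profit N p C x = p (total N x) * total N x - cost N C x"
  by (simp add: profit_def cost_def)

lemma welfare_eq: "welfare N p C x = integral {0..total N x} p - cost N C x"
  by (simp add: welfare_def cost_def)

lemma sum_fun_upd:
  fixes g :: "nat \<Rightarrow> real \<Rightarrow> real"
  assumes "n < N"
  shows "(\<Sum>k<N. g k ((x(n:=v)) k)) = (\<Sum>k<N. g k (x k)) + (g n v - g n (x n))"
proof -
  have "(\<Sum>k<N. g k ((x(n:=v)) k)) = (\<Sum>k<N. g k (x k) + (if k = n then g n v - g n (x n) else 0))"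
    by (rule sum.cong) auto
  also have "\<dots> = (\<Sum>k<N. g k (x k)) + (g n v - g n (x n))"
    using assms by (simp add: sum.distrib)
  finally show ?thesis .
qed

lemma total_fun_upd: "n < N \<Longrightarrow> total N (x(n:=v)) = total N x + (v - x n)"
  unfolding total_def using sum_fun_upd[of n N "\<lambda>k v. v" x v] by simp

lemma cost_fun_upd: "n < N \<Longrightarrow> cost N C (x(n:=v)) = cost N C x + (C n v - C n (x n))"
  unfolding cost_def by (rule sum_fun_upd)

lemma total_nonneg: "feasible N x \<Longrightarrow> 0 \<le> total N x"
  unfolding total_def feasible_def by (intro sum_nonneg) auto

lemma le_total: "feasible N x \<Longrightarrow> n < N \<Longrightarrow> x n \<le> total N x"
  unfolding total_def feasible_def by (intro member_le_sum) auto

lemma cost_segment: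
  assumes conv: "\<And>n. n < N \<Longrightarrow> convex_on {0..} (C n)"
    and x: "feasible N x" and y: "feasible N y" and l: "0 \<le> l" "l \<le> 1"
  shows "cost N C (\<lambda>k. x k + l * (y k - x k)) \<le> (1 - l) * cost N C x + l * cost N C y"
proof -
  have "cost N C (\<lambda>k. x k + l * (y k - x k)) \<le> (\<Sum>k<N. (1 - l) * C k (x k) + l * C k (y k))"
    unfolding cost_def
  proof (rule sum_mono)
    fix k assume "k \<in> {..<N}"
    with x y l have "C k ((1 - l) *\<^sub>R x k + l *\<^sub>R y k) \<le> (1 - l) * C k (x k) + l * C k (y k)"
      by (intro convex_onD[OF conv]) (auto simp: feasible_def)
    then show "C k (x k + l * (y k - x k)) \<le> (1 - l) * C k (x k) + l * C k (y k)"
      by (simp add: algebra_simps)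
  qed
  also have "\<dots> = (1 - l) * cost N C x + l * cost N C y"
    by (simp add: cost_def sum.distrib sum_distrib_left)
  finally show ?thesis .
qed

lemma total_segment: "total N (\<lambda>k. x k + l * (y k - x k)) = total N x + l * (total N y - total N x)"
  by (simp add: total_def sum.distrib sum_distrib_left[symmetric] sum_subtractf)

lemma feasible_segment:
  assumes "feasible N x" "feasible N y" "0 \<le> l" "l \<le> 1"
  shows "feasible N (\<lambda>k. x k + l * (y k - x k))"
proof -
  have "0 \<le> (1 - l) * x k + l * y k" if "k < N" for k
    using assms that by (intro add_nonneg_nonneg mult_nonneg_nonneg) (auto simp: feasible_def)
  then show ?thesis by (simp add: feasible_def algebra_simps)
qed

locale cournot =
  fixes N :: nat and p :: "real \<Rightarrow> real" and C :: "nat \<Rightarrow> real \<Rightarrow> real"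
  assumes suppliers: "1 \<le> N" and costs: "assm1 N C" and demand: "assm2 p"
begin

lemma C_convex: "n < N \<Longrightarrow> convex_on {0..} (C n)"
  using costs by (simp add: assm1_def)

lemma C_zero: "n < N \<Longrightarrow> C n 0 = 0"
  using costs by (simp add: assm1_def)

lemma p_continuous: "continuous_on {0..} p"
  using demand by (simp add: assm2_def)

lemma p_antimono: "0 \<le> a \<Longrightarrow> a \<le> b \<Longrightarrow> p b \<le> p a"
  using demand by (simp add: assm2_def)

text \<open>Marginal costs exist as right derivatives on \<open>[0,\<infinity>)\<close>: at \<open>0\<close> by convexity and
  monotonicity, elsewhere by differentiability.\<close>
lemma C_right_deriv:
  assumes n: "n < N" and q: "0 \<le> q"
  shows "(C n has_real_derivative right_deriv (C n) q) (at_right q)"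
proof -
  have "\<exists>D. (C n has_real_derivative D) (at_right q)"
  proof (cases "q = 0")
    case True
    with n costs show ?thesis
      by (simp add: assm1_def convex_mono_right_differentiable_0)
  next
    case False
    with n q costs have "C n differentiable (at q)" by (simp add: assm1_def)
    then have "(C n has_real_derivative deriv (C n) q) (at q)"
      by (simp add: DERIV_deriv_iff_real_differentiable)
    then show ?thesis by (intro exI) (rule has_field_derivative_at_within)
  qed
  then show ?thesis using right_deriv_eqI by metis
qed

lemma p_right_deriv:
  assumes "0 \<le> q" shows "(p has_real_derivative right_deriv p q) (at_right q)"
proof -
  have "\<exists>D. (p has_real_derivative D) (at_right q)"
    using demand assms by (cases "q = 0") (auto simp: assm2_def)
  then show ?thesis using right_deriv_eqI by metis
qed

lemma p_left_deriv:
  assumes "0 < q" shows "(p has_real_derivative left_deriv p q) (at_left q)"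
proof -
  have "\<exists>D. (p has_real_derivative D) (at_left q)"
    using demand assms by (auto simp: assm2_def)
  then show ?thesis using left_deriv_eqI by metis
qed

lemma min_mc_le: "n < N \<Longrightarrow> min_mc N C q \<le> right_deriv (C n) q"
  unfolding min_mc_def by (rule Min_le) auto

lemma min_mc_greatest: "(\<And>n. n < N \<Longrightarrow> a \<le> right_deriv (C n) q) \<Longrightarrow> a \<le> min_mc N C q"
  unfolding min_mc_def using suppliers by (subst Min_ge_iff) (auto simp: lessThan_empty_iff)

lemma min_mc_attained:
  obtains m where "m < N" "right_deriv (C m) q = min_mc N C q"
proof -
  have "min_mc N C q \<in> (\<lambda>n. right_deriv (C n) q) ` {..<N}"
    unfolding min_mc_def using suppliers by (intro Min_in) (auto simp: lessThan_empty_iff)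
  with that show ?thesis by auto
qed

lemma cost_ge_min_mc:
  assumes x: "feasible N x"
  shows "min_mc N C 0 * total N x \<le> cost N C x"
proof -
  have "min_mc N C 0 * total N x = (\<Sum>n<N. min_mc N C 0 * x n)"
    by (simp add: total_def sum_distrib_left)
  also have "\<dots> \<le> cost N C x" unfolding cost_def
  proof (rule sum_mono)
    fix n assume "n \<in> {..<N}"
    then have n: "n < N" and xn: "0 \<le> x n" using x by (auto simp: feasible_def)
    have "C n 0 + right_deriv (C n) 0 * (x n - 0) \<le> C n (x n)"
      using xn by (intro convex_right_tangent[OF C_convex[OF n] C_right_deriv[OF n]]) auto
    moreover have "min_mc N C 0 * x n \<le> right_deriv (C n) 0 * x n"
      by (rule mult_right_mono[OF min_mc_le[OF n] xn])
    ultimately show "min_mc N C 0 * x n \<le> C n (x n)" using C_zero[OF n] by simp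
  qed
  finally show ?thesis .
qed

text \<open>Raising one supplier's output by \<open>y - X\<close> does not pay off for a monopolist; by convexity of
  \<open>C n\<close> the extra cost is bounded by the chord of \<open>C n\<close> over \<open>[X, y]\<close>.\<close>
lemma monopoly_revenue_slope:
  assumes x: "monopoly_output N p C x" and n: "n < N" and y: "total N x < y"
  defines "X \<equiv> total N x"
  shows "(p y * y - p X * X) / (y - X) \<le> (C n y - C n X) / (y - X)"
proof -
  have fx: "feasible N x" using x by (simp add: monopoly_output_def)
  have xn: "0 \<le> x n" "x n \<le> X" using fx n le_total[OF fx n] by (auto simp: feasible_def X_def)
  define z where "z = x(n := x n + (y - X))"
  have "feasible N z" using fx xn y by (auto simp: feasible_def z_def X_def)
  then have "profit N p C z \<le> profit N p C x" using x by (simp add: monopoly_output_def)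
  then have "p y * y - p X * X \<le> C n (x n + (y - X)) - C n (x n)"
    unfolding z_def profit_eq total_fun_upd[OF n] cost_fun_upd[OF n] X_def by simp
  then have "(p y * y - p X * X) / (y - X) \<le> (C n (x n + (y - X)) - C n (x n)) / ((x n + (y - X)) - x n)"
    using y by (simp add: X_def divide_right_mono)
  also have "\<dots> \<le> (C n y - C n X) / (y - X)"
    using xn y by (intro convex_slope_mono[OF C_convex[OF n]]) (auto simp: X_def)
  finally show ?thesis .
qed

lemma monopoly_first_order:
  assumes x: "monopoly_output N p C x"
  defines "X \<equiv> total N x"
  shows "p X + X * right_deriv p X \<le> min_mc N C X"
proof (rule min_mc_greatest)
  fix n assume n: "n < N"
  have X0: "0 \<le> X" using x total_nonneg by (simp add: monopoly_output_def X_def)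
  have "((\<lambda>y. (p y - p X) / (y - X) * y + p X) \<longlongrightarrow> right_deriv p X * X + p X) (at_right X)"
    using p_right_deriv[OF X0] by (intro tendsto_intros) (simp add: has_field_derivative_iff)
  moreover have "\<forall>\<^sub>F y in at_right X. (p y - p X) / (y - X) * y + p X = (p y * y - p X * X) / (y - X)"
    by (rule eventually_mono[OF eventually_at_right_less[of X]]) (simp add: field_simps)
  ultimately have revenue: "((\<lambda>y. (p y * y - p X * X) / (y - X)) \<longlongrightarrow> right_deriv p X * X + p X) (at_right X)"
    by (rule Lim_transform_eventually)
  have marginal_cost: "((\<lambda>y. (C n y - C n X) / (y - X)) \<longlongrightarrow> right_deriv (C n) X) (at_right X)"
    using C_right_deriv[OF n X0] by (simp add: has_field_derivative_iff)
  have "right_deriv p X * X + p X \<le> right_deriv (C n) X"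
    by (rule tendsto_le[OF _ marginal_cost revenue])
      (auto intro: eventually_mono[OF eventually_at_right_less[of X]]
        monopoly_revenue_slope[OF x n, folded X_def])
  then show "p X + X * right_deriv p X \<le> right_deriv (C n) X" by (simp add: algebra_simps)
qed

text \<open>Under Assumption 4 some supplier can make a positive profit alone by producing a small
  amount: near \<open>0\<close> the price exceeds its average cost.\<close>
lemma positive_profit_exists:
  assumes "assm4 N p C"
  obtains v where "feasible N v" "0 < profit N p C v"
proof -
  obtain m where m: "m < N" "right_deriv (C m) 0 = min_mc N C 0" by (rule min_mc_attained)
  define h where "h y = p y - C m y / y" for y
  have "(p \<longlongrightarrow> p 0) (at_right 0)"
    using p_continuous by (auto simp: continuous_on_def intro: tendsto_within_subset)
  moreover have "((\<lambda>y. C m y / y) \<longlongrightarrow> min_mc N C 0) (at_right 0)"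
    using C_right_deriv[OF m(1), of 0] m C_zero[OF m(1)] by (simp add: has_field_derivative_iff)
  ultimately have "(h \<longlongrightarrow> p 0 - min_mc N C 0) (at_right 0)"
    unfolding h_def by (intro tendsto_intros)
  moreover have "0 < p 0 - min_mc N C 0" using assms by (simp add: assm4_def)
  ultimately have "\<forall>\<^sub>F y in at_right 0. 0 < h y" by (rule order_tendstoD(1))
  then have near_0: "\<forall>\<^sub>F y in at_right 0. 0 < y \<and> 0 < h y"
    by (rule eventually_conj[OF eventually_at_right_less])
  have "\<exists>y. 0 < y \<and> 0 < h y"
    using frequently_ex[OF eventually_frequently[OF _ near_0]] by simp
  then obtain y where y: "0 < y" "0 < h y" by blast
  define v where "v = (\<lambda>_. 0::real)(m := y)"
  have "feasible N v" using y by (simp add: feasible_def v_def)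
  moreover have "profit N p C v = y * h y"
    using y C_zero m(1) unfolding v_def profit_eq total_fun_upd[OF m(1)] cost_fun_upd[OF m(1)]
    by (simp add: total_def cost_def h_def field_simps)
  ultimately show ?thesis using that y by simp
qed

lemma monopoly_total_pos:
  assumes "assm4 N p C" and x: "monopoly_output N p C x"
  shows "0 < total N x"
proof (rule ccontr)
  assume "\<not> 0 < total N x"
  with x total_nonneg have "total N x = 0" by (force simp: monopoly_output_def)
  with monopoly_first_order[OF x] have "p 0 \<le> min_mc N C 0" by simp
  with assms show False by (simp add: assm4_def)
qed

text \<open>The point \<open>s\<close> where the price first reaches the least initial marginal cost exists
  (Assumptions 3, 4 and continuity) and is positive.\<close>
lemma min_mc_price_level:
  assumes "assm3 N p C" "assm4 N p C"
  defines "s \<equiv> Inf {q. 0 \<le> q \<and> p q = min_mc N C 0}"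
  shows "0 < s" and "p s = min_mc N C 0"
proof -
  let ?S = "{q. 0 \<le> q \<and> p q = min_mc N C 0}"
  obtain R where R: "0 < R" "p R \<le> min_mc N C 0" using assms(1) by (auto simp: assm3_def)
  have above: "min_mc N C 0 < p 0" using assms(2) by (simp add: assm4_def)
  have "\<exists>q. 0 \<le> q \<and> q \<le> R \<and> p q = min_mc N C 0"
    using R above by (intro IVT2') (auto intro: continuous_on_subset[OF p_continuous])
  then have "?S \<noteq> {}" by auto
  moreover have "closed ?S"
  proof -
    have "closed {q \<in> {0..}. p q = min_mc N C 0}"
      by (rule continuous_closed_preimage_constant[OF p_continuous]) auto
    moreover have "{q \<in> {0..}. p q = min_mc N C 0} = ?S" by auto
    ultimately show ?thesis by simp
  qed
  ultimately have "s \<in> ?S"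
    unfolding s_def by (intro closed_contains_Inf) (auto intro: bdd_belowI[of _ 0])
  with above show "0 < s" "p s = min_mc N C 0" by (auto simp: less_eq_real_def)
qed

lemma p_integrable: "0 \<le> a \<Longrightarrow> p integrable_on {a..b}"
  by (rule integrable_continuous_interval, rule continuous_on_subset[OF p_continuous]) auto

lemma integral_p_le:
  assumes "0 \<le> a" "a \<le> b" "\<And>q. a \<le> q \<Longrightarrow> q \<le> b \<Longrightarrow> p q \<le> k"
  shows "integral {a..b} p \<le> (b - a) * k"
proof -
  have "integral {a..b} p \<le> integral {a..b} (\<lambda>_. k)"
    using assms by (intro integral_le[OF p_integrable]) auto
  then show ?thesis using assms by (simp add: content_real)
qed

lemma integral_p_ge:
  assumes "0 \<le> a" "a \<le> b" "\<And>q. a \<le> q \<Longrightarrow> q \<le> b \<Longrightarrow> k \<le> p q"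
  shows "(b - a) * k \<le> integral {a..b} p"
proof -
  have "integral {a..b} (\<lambda>_. k) \<le> integral {a..b} p"
    using assms by (intro integral_le[OF _ p_integrable]) auto
  then show ?thesis using assms by (simp add: content_real)
qed

lemma integral_p_split:
  "0 \<le> a \<Longrightarrow> a \<le> c \<Longrightarrow> c \<le> b \<Longrightarrow> integral {a..c} p + integral {c..b} p = integral {a..b} p"
  by (intro Henstock_Kurzweil_Integration.integral_combine p_integrable) auto

text \<open>Since the price is nonincreasing, consumer surplus is nonnegative: welfare dominates profit.\<close>
lemma profit_le_welfare:
  assumes "feasible N x" shows "profit N p C x \<le> welfare N p C x"
proof -
  have "(total N x - 0) * p (total N x) \<le> integral {0..total N x} p"
    using total_nonneg[OF assms] by (intro integral_p_ge) (auto intro: p_antimono)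
  then show ?thesis by (simp add: profit_eq welfare_eq mult.commute)
qed

lemma welfare_gap:
  assumes x: "feasible N x" and y: "feasible N y"
    and supp: "cost N C x + \<mu> * (total N y - total N x) \<le> cost N C y"
    and markup: "\<mu> \<le> p (total N x)" and L: "0 \<le> L"
    and tail: "\<And>q. total N x + L \<le> q \<Longrightarrow> p q \<le> \<mu>"
  shows "welfare N p C y - welfare N p C x \<le> L * (p (total N x) - \<mu>)"
proof -
  define X where "X = total N x"
  define Y where "Y = total N y"
  have X0: "0 \<le> X" and Y0: "0 \<le> Y" using x y total_nonneg by (auto simp: X_def Y_def)
  have gain: "welfare N p C y - welfare N p C x \<le> integral {0..Y} p - integral {0..X} p - \<mu> * (Y - X)"
    using supp by (simp add: welfare_eq X_def Y_def)
  consider "Y \<le> X" | "X < Y" "Y \<le> X + L" | "X + L < Y" by linarith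
  then show ?thesis
  proof cases
    case 1
    have "(X - Y) * p X \<le> integral {Y..X} p"
      using 1 Y0 by (intro integral_p_ge) (auto intro: p_antimono)
    moreover have "integral {0..Y} p + integral {Y..X} p = integral {0..X} p"
      using 1 Y0 by (intro integral_p_split) auto
    ultimately have "welfare N p C y - welfare N p C x \<le> (X - Y) * (\<mu> - p X)"
      using gain by (simp add: algebra_simps)
    also have "\<dots> \<le> L * (p X - \<mu>)"
      using 1 markup L by (simp add: X_def mult_nonneg_nonpos order_trans[of _ 0])
    finally show ?thesis by (simp add: X_def)
  next
    case 2
    have "integral {X..Y} p \<le> (Y - X) * p X"
      using 2 X0 by (intro integral_p_le) (auto intro: p_antimono)
    moreover have "integral {0..X} p + integral {X..Y} p = integral {0..Y} p"
      using 2 X0 by (intro integral_p_split) auto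
    ultimately have "welfare N p C y - welfare N p C x \<le> (Y - X) * (p X - \<mu>)"
      using gain by (simp add: algebra_simps)
    also have "\<dots> \<le> L * (p X - \<mu>)"
      using 2 markup by (intro mult_right_mono) (auto simp: X_def)
    finally show ?thesis by (simp add: X_def)
  next
    case 3
    have "integral {X..X + L} p \<le> (X + L - X) * p X"
      using L X0 by (intro integral_p_le) (auto intro: p_antimono)
    moreover have "integral {X + L..Y} p \<le> (Y - (X + L)) * \<mu>"
      using 3 L X0 tail by (intro integral_p_le) (auto simp: X_def)
    moreover have "integral {0..X} p + (integral {X..X + L} p + integral {X + L..Y} p) = integral {0..Y} p"
      using 3 L X0 by (simp add: integral_p_split)
    ultimately show ?thesis using gain by (simp add: X_def algebra_simps)
  qed
qed


lemma p_right_deriv_nonpos: "0 \<le> q \<Longrightarrow> right_deriv p q \<le> 0"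
  by (rule antimono_right_deriv_nonpos[OF p_right_deriv]) (auto intro: p_antimono)

lemma monopoly_welfare_pos:
  assumes "assm4 N p C" and x: "monopoly_output N p C x"
  shows "0 < welfare N p C x"
proof -
  obtain v where "feasible N v" "0 < profit N p C v" using positive_profit_exists[OF assms(1)] .
  with x have "0 < profit N p C x" by (force simp: monopoly_output_def)
  with x profit_le_welfare show ?thesis by (force simp: monopoly_output_def)
qed

end

locale convex_cournot = cournot +
  assumes p_convex: "convex_on {0..} p"
begin

text \<open>Moving a monopoly output a fraction \<open>l\<close> of the way towards any feasible \<open>y\<close> does not
  raise profit; with the tangent line of the convex \<open>p\<close> this bounds the cost increase from below.\<close>
lemma monopoly_perturbation:
  assumes x: "monopoly_output N p C x" and y: "feasible N y" and l: "0 < l" "l \<le> 1"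
  defines "X \<equiv> total N x" and "d \<equiv> total N y - total N x"
  shows "d * (p X + X * right_deriv p X) + right_deriv p X * l * d\<^sup>2 \<le> cost N C y - cost N C x"
proof -
  have fx: "feasible N x" using x by (simp add: monopoly_output_def)
  define z where "z = (\<lambda>k. x k + l * (y k - x k))"
  have fz: "feasible N z" using feasible_segment[OF fx y] l by (simp add: z_def)
  have tz: "total N z = X + l * d" using total_segment by (simp add: z_def X_def d_def)
  have cz: "cost N C z \<le> (1 - l) * cost N C x + l * cost N C y"
    using cost_segment[OF C_convex fx y] l by (simp add: z_def)
  have "profit N p C z \<le> profit N p C x" using x fz by (simp add: monopoly_output_def)
  then have profit_drop: "p (X + l * d) * (X + l * d) - cost N C z \<le> p X * X - cost N C x"
    by (simp add: profit_eq tz X_def)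
  have X0: "0 \<le> X" and Z0: "0 \<le> X + l * d"
    using total_nonneg[OF fx] total_nonneg[OF fz] by (simp_all add: X_def tz)
  have "p X + right_deriv p X * (X + l * d - X) \<le> p (X + l * d)"
    by (rule convex_right_tangent[OF p_convex p_right_deriv[OF X0] X0 Z0])
  then have "(p X + right_deriv p X * l * d) * (X + l * d) \<le> p (X + l * d) * (X + l * d)"
    by (intro mult_right_mono Z0) simp
  with profit_drop cz
  have "l * (d * (p X + X * right_deriv p X) + right_deriv p X * l * d\<^sup>2) \<le> l * (cost N C y - cost N C x)"
    by (simp add: algebra_simps power2_eq_square)
  then show ?thesis using l by simp
qed

lemma monopoly_supporting_cost:
  assumes x: "monopoly_output N p C x" and y: "feasible N y"
  defines "X \<equiv> total N x"
  shows "cost N C x + (p X + X * right_deriv p X) * (total N y - X) \<le> cost N C y"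
proof (rule le_of_vanishing_perturbation)
  have "0 \<le> X" using x total_nonneg by (simp add: monopoly_output_def X_def)
  then show "0 \<le> - right_deriv p X * (total N y - X)\<^sup>2"
    using p_right_deriv_nonpos by (simp add: mult_nonpos_nonneg)
next
  fix l :: real assume "0 < l" "l \<le> 1"
  from monopoly_perturbation[OF x y this]
  show "cost N C x + (p X + X * right_deriv p X) * (total N y - X)
          - l * (- right_deriv p X * (total N y - X)\<^sup>2) \<le> cost N C y"
    by (simp add: X_def algebra_simps)
qed

text \<open>Beyond \<open>X + (p X - \<mu>) / |p'\<^sub>-(s)|\<close> the price is at most \<open>\<mu>\<close>, provided \<open>p s \<le> \<mu> \<le> p X\<close>:
  before \<open>s\<close> the convex \<open>p\<close> falls at least at rate \<open>|p'\<^sub>-(s)|\<close>, after \<open>s\<close> it stays below \<open>p s\<close>.\<close>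
lemma price_tail_bound:
  assumes s: "0 < s" "p s \<le> \<mu>" "left_deriv p s < 0"
    and X: "0 \<le> X" "\<mu> \<le> p X"
    and q: "X + (p X - \<mu>) / (- left_deriv p s) \<le> q"
  shows "p q \<le> \<mu>"
proof (cases "s \<le> q")
  case True
  then show ?thesis using s p_antimono[of s q] by simp
next
  case False
  have L0: "0 \<le> (p X - \<mu>) / (- left_deriv p s)" using s X by (intro divide_nonneg_pos) auto
  show ?thesis
  proof (cases "X < q")
    case True
    have "(p q - p X) / (q - X) \<le> left_deriv p s"
      using True False X by (intro convex_slope_le_left_deriv[OF p_convex p_left_deriv[OF s(1)]]) auto
    then have "p q - p X \<le> left_deriv p s * (q - X)" using True by (simp add: divide_le_eq)
    also have "\<dots> \<le> left_deriv p s * ((p X - \<mu>) / (- left_deriv p s))"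
      using q s by (intro mult_left_mono_neg) auto
    also have "\<dots> = \<mu> - p X" using s by (simp add: field_simps)
    finally show ?thesis by simp
  next
    case False
    with q L0 have "q = X" and "(p X - \<mu>) / (- left_deriv p s) = 0" by linarith+
    with s show ?thesis by simp
  qed
qed

text \<open>The price exceeds the
  marginal revenue \<open>\<mu>\<close> by \<open>\<delta> X\<close> at \<open>X\<close> and drops below \<open>\<mu>\<close> within distance \<open>\<delta> X / \<alpha>\<close>, so the
  gain is at most \<open>(\<delta> X)\<^sup>2 / \<alpha>\<close>, while the monopoly welfare is at least its profit \<open>\<ge> \<delta> X\<^sup>2\<close>.\<close>
lemma monopoly_welfare_loss:
  assumes A3: "assm3 N p C" and A4: "assm4 N p C"
    and s_def: "s = Inf {q. 0 \<le> q \<and> p q = min_mc N C 0}" and slope_s: "left_deriv p s < 0"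
    and y: "feasible N y" and x: "monopoly_output N p C x"
  shows "- left_deriv p s * (welfare N p C y - welfare N p C x)
           \<le> - right_deriv p (total N x) * welfare N p C x"
proof -
  define X where "X = total N x"
  define \<delta> where "\<delta> = - right_deriv p X"
  define \<mu> where "\<mu> = p X + X * right_deriv p X"
  define \<alpha> where "\<alpha> = - left_deriv p s"
  define L where "L = \<delta> * X / \<alpha>"
  have markup: "p X - \<mu> = \<delta> * X" by (simp add: \<mu>_def \<delta>_def)
  have fx: "feasible N x" using x by (simp add: monopoly_output_def)
  have X: "0 < X" using monopoly_total_pos[OF A4 x] by (simp add: X_def)
  have \<delta>: "0 \<le> \<delta>" using p_right_deriv_nonpos X by (simp add: \<delta>_def)
  have \<alpha>: "0 < \<alpha>" using slope_s by (simp add: \<alpha>_def)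
  have s: "0 < s" "p s = min_mc N C 0" using min_mc_price_level[OF A3 A4] by (simp_all add: s_def)
  have supp: "cost N C x + \<mu> * (total N z - X) \<le> cost N C z" if "feasible N z" for z
    using monopoly_supporting_cost[OF x that] by (simp add: \<mu>_def X_def)
  have "cost N C x \<le> \<mu> * X"
    using supp[of "\<lambda>_. 0"] by (simp add: feasible_def total_def cost_def C_zero)
  then have "min_mc N C 0 * X \<le> \<mu> * X" using cost_ge_min_mc[OF fx] by (simp add: X_def)
  then have ps: "p s \<le> \<mu>" using s X by simp
  have "0 \<le> \<delta> * X" using \<delta> X by simp
  then have below_price: "\<mu> \<le> p X" using markup by linarith
  have tail: "p q \<le> \<mu>" if "X + L \<le> q" for q
  proof (rule price_tail_bound[OF s(1) ps slope_s _ below_price])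
    show "0 \<le> X" using X by simp
    show "X + (p X - \<mu>) / (- left_deriv p s) \<le> q" using that by (simp add: markup L_def \<alpha>_def)
  qed
  have L: "0 \<le> L" using \<delta> X \<alpha> by (simp add: L_def)
  have gain: "welfare N p C y - welfare N p C x \<le> L * (\<delta> * X)"
    using welfare_gap[OF fx y supp[OF y, unfolded X_def] below_price[unfolded X_def] L
        tail[unfolded X_def]] markup
    by (simp add: X_def)
  have "\<delta> * X\<^sup>2 \<le> profit N p C x"
    using supp[of "\<lambda>_. 0"] markup
    by (simp add: profit_eq feasible_def total_def cost_def C_zero X_def power2_eq_square algebra_simps)
  also have "\<dots> \<le> welfare N p C x" by (rule profit_le_welfare[OF fx])
  finally have margin: "\<delta> * X\<^sup>2 \<le> welfare N p C x" .
  have "\<alpha> * (welfare N p C y - welfare N p C x) \<le> \<alpha> * (L * (\<delta> * X))"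
    using gain \<alpha> by simp
  also have "\<dots> = \<delta> * (\<delta> * X\<^sup>2)" using \<alpha> by (simp add: L_def power2_eq_square)
  also have "\<dots> \<le> \<delta> * welfare N p C x" using margin \<delta> by (rule mult_left_mono)
  finally show ?thesis by (simp add: \<alpha>_def \<delta>_def X_def)
qed

end

lemma efficiency_ratio_bound:
  fixes a b \<delta> WP WS :: real
  assumes a: "a < 0" and WP: "0 < WP" "WP \<le> WS" and \<delta>: "\<delta> \<le> - b"
    and loss: "- a * (WS - WP) \<le> \<delta> * WP"
  shows "a / (3 * a + b) \<le> WP / WS"
proof -
  have "0 \<le> - a * (WS - WP)" using a WP by (intro mult_nonneg_nonneg) auto
  then have "0 \<le> \<delta> * WP" using loss by linarith
  then have "0 \<le> \<delta>" using WP by (simp add: zero_le_mult_iff)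
  then have den: "0 < - (3 * a + b)" using a \<delta> by linarith
  have "- a * WS \<le> (\<delta> - a) * WP" using loss by (simp add: algebra_simps)
  also have "\<dots> \<le> - (3 * a + b) * WP" using a \<delta> WP by (intro mult_right_mono) auto
  finally have cross: "- a * WS \<le> - (3 * a + b) * WP" .
  have "a / (3 * a + b) = - a / - (3 * a + b)" by (rule minus_divide_divide[symmetric])
  also have "\<dots> \<le> WP / WS" using cross den WP by (simp add: field_simps)
  finally show ?thesis .
qed

theorem corollary3:
  fixes N :: nat and p :: "real \<Rightarrow> real" and C :: "nat \<Rightarrow> real \<Rightarrow> real"
    and xP xS :: "nat \<Rightarrow> real" and s t :: real
  assumes "N \<ge> 1"
    and "assm1 N C" and "assm2 p" and "assm3 N p C" and "assm4 N p C"
    and "convex_on {0..} p"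
    and s_def: "s = Inf {q. 0 \<le> q \<and> p q = min_mc N C 0}"
    and t_def: "t = Inf {q. 0 \<le> q \<and> min_mc N C q \<ge> p q + q * right_deriv p q}"
    and "left_deriv p s < 0"
    and "social_optimum N p C xS"
    and "monopoly_output N p C xP"
  shows "efficiency N p C xS xP \<ge>
           left_deriv p s / (3 * left_deriv p s + right_deriv p t)"
proof -
  interpret convex_cournot N p C using assms(1-3,6) by unfold_locales
  note xS = assms(10) and xP = assms(11)
  define X where "X = total N xP"
  have "X \<in> {q. 0 \<le> q \<and> min_mc N C q \<ge> p q + q * right_deriv p q}"
    using monopoly_first_order[OF xP] total_nonneg xP by (simp add: X_def monopoly_output_def)
  then have "t \<le> X" and "0 \<le> t" unfolding t_def
    by (auto intro: cInf_lower cInf_greatest bdd_belowI[of _ 0])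
  then have slope_t: "right_deriv p t \<le> right_deriv p X"
    by (intro convex_right_deriv_mono[OF p_convex p_right_deriv p_right_deriv]) auto
  have loss: "- left_deriv p s * (welfare N p C xS - welfare N p C xP) \<le> - right_deriv p X * welfare N p C xP"
    using monopoly_welfare_loss[OF assms(4,5) s_def assms(9) _ xP] xS
    by (simp add: social_optimum_def X_def)
  have "0 < welfare N p C xP" by (rule monopoly_welfare_pos[OF assms(5) xP])
  moreover have "welfare N p C xP \<le> welfare N p C xS"
    using xS xP by (simp add: social_optimum_def monopoly_output_def)
  ultimately show ?thesis
    unfolding efficiency_def using efficiency_ratio_bound[OF assms(9) _ _ _ loss] slope_t by simp
qed

end
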